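(* Assume $\Phi$ is an involution. Let $\overline\pi\in\arg\min_{\pi\in\mathcal{C}_{\mathrm{coh}}\cap\Pi}\mathbb{E}_{x\sim\mathcal{D}_{\mathcal{X}}}[\mathsf{B}_F(\pi(x)\parallel\pi^*(x))]$ be the Bregman projection of $\pi^*$ onto $\mathcal{C}_{\mathrm{coh}}\cap\Pi$ and $\epsilon=\mathbb{E}_{x\sim\mathcal{D}_{\mathcal{X}}}[\mathsf{B}_F(\pi^*(x)\parallel\overline\pi(x))]$. Let $\widehat\pi$ be the solution of $\min_{\pi\in\mathcal{C}_{\mathrm{coh}}\cap\Pi}\mathbb{E}_{x\sim\mathcal{D}_{\mathcal{X}}}[\mathsf{B}_F(\pi(x)\parallel\pi_0(x))]$. Then (all expectations over $x\sim\mathcal{D}_{\mathcal{X}}$) $$\mathbb{E}[\mathsf{B}_F(\pi^*(x)\parallel\widehat\pi(x))]-\mathbb{E}[\mathsf{B}_F(\pi^*(x)\parallel\pi_0(x))]\le-\mathbb{E}[\mathsf{B}_F(\widehat\pi(x)\parallel\pi_0(x))]+\mathbb{E}\big[\langle\pi^*(x)-\overline\pi(x),\nabla F(\pi_0(x))-\nabla F(\widehat\pi(x))\rangle\big].$$ If $F$ is $\mu$-strongly convex with respect to a norm $\|\cdot\|$ (dual norm $\|\cdot\|_*$), then $$\mathbb{E}[\mathsf{B}_F(\pi^*(x)\parallel\widehat\pi(x))]-\mathbb{E}[\mathsf{B}_F(\pi^*(x)\parallel\pi_0(x))]\le-\mathbb{E}[\mathsf{B}_F(\widehat\pi(x)\parallel\pi_0(x))]+\sqrt{\tfrac{2\epsilon}{\mu}}\sqrt{\mathbb{E}\big[\|\nabla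 F(\pi_0(x))-\nabla F(\widehat\pi(x))\|_*^2\big]}.$$ If furthermore $F$ is $L$-smooth, then with $D=\mathbb{E}[\mathsf{B}_F(\widehat\pi(x)\parallel\pi_0(x))]$, $$\mathbb{E}[\mathsf{B}_F(\pi^*(x)\parallel\widehat\pi(x))]-\mathbb{E}[\mathsf{B}_F(\pi^*(x)\parallel\pi_0(x))]\le-D+\frac{2L}{\mu}\sqrt{\epsilon D},$$ and the right-hand side is strictly negative whenever $\epsilon<\big(\frac{\mu}{2L}\big)^2D$.
   Context: $\mathcal{X},\mathcal{Y}$ finite; models are maps $\pi\colon\mathcal{X}\to\Delta(\mathcal{Y})$, $\Pi_{\mathrm{all}}=\Delta(\mathcal{Y})^{\mathcal{X}}$; $\Pi\subseteq\Pi_{\mathrm{all}}$ closed and convex; $\pi_0\in\Pi_{\mathrm{all}}$ baseline; $\pi^*\colon\mathcal{X}\to\Delta(\mathcal{Y})$ a reference model (not assumed coherent); $\mathcal{D}_{\mathcal{X}}$ a full-support distribution on $\mathcal{X}$. $\Phi\colon\mathcal{X}\to\mathcal{X}$ and $\mathcal{C}_{\mathrm{coh}}=\{\pi\in\Pi_{\mathrm{all}}:\pi(x)=\pi(\Phi(x))\ \forall x\}$. $F$ is convex, differentiable on the interior of its domain (which contains $\Delta(\mathcal{Y})$, all relevant values lying where $\nabla F$ is defined), $\mathsf{B}_F(p\parallel q)=F(p)-F(q)-\langle\nabla F(q),p-q\rangle$. $\mu$-strong convexity: $\mathsf{B}_F(p\parallel q)\ge\frac{\mu}{2}\|p-q\|^2$;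 $L$-smoothness: $\|\nabla F(p)-\nabla F(q)\|_*\le L\|p-q\|$. *)

theory Defs
  imports "HOL-Analysis.Analysis" "HOL-Probability.Probability"
begin

definition prob_simplex :: "(real^'y::finite) set" where
  "prob_simplex = {p. (\<forall>y. 0 \<le> p $ y) \<and> (\<Sum>y\<in>UNIV. p $ y) = 1}"

definition Pi_all :: "('x::finite \<Rightarrow> real^'y::finite) set" where
  "Pi_all = {\<pi>. \<forall>x. \<pi> x \<in> prob_simplex}"

definition models_convex :: "('x \<Rightarrow> real^'y::finite) set \<Rightarrow> bool" where
  "models_convex P \<longleftrightarrow> (\<forall>\<pi>\<in>P. \<forall>\<sigma>\<in>P. \<forall>t::real. 0 \<le> t \<and> t \<le> 1 \<longrightarrow>
      (\<lambda>x. (1 - t) *\<^sub>R \<pi> x + t *\<^sub>R \<sigma> x) \<in> P)"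

definition C_coh :: "('x::finite \<Rightarrow> 'x) \<Rightarrow> ('x \<Rightarrow> real^'y::finite) set" where
  "C_coh \<Phi> = {\<pi>\<in>Pi_all. \<forall>x. \<pi> x = \<pi> (\<Phi> x)}"

definition bregman :: "((real^'y::finite) \<Rightarrow> real) \<Rightarrow> ((real^'y) \<Rightarrow> real^'y) \<Rightarrow> real^'y \<Rightarrow> real^'y \<Rightarrow> real" where
  "bregman F gradF p q = F p - F q - gradF q \<bullet> (p - q)"

definition Ex :: "'x pmf \<Rightarrow> ('x \<Rightarrow> real) \<Rightarrow> real" where
  "Ex D f = measure_pmf.expectation D f"

definition is_norm :: "((real^'y::finite) \<Rightarrow> real) \<Rightarrow> bool" where
  "is_norm N \<longleftrightarrow> (\<forall>v. 0 \<le> N v) \<and> (\<forall>v. N v = 0 \<longleftrightarrow> v = 0)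
     \<and> (\<forall>c v. N (c *\<^sub>R v) = \<bar>c\<bar> * N v) \<and> (\<forall>u v. N (u + v) \<le> N u + N v)"

definition dual_norm :: "((real^'y::finite) \<Rightarrow> real) \<Rightarrow> real^'y \<Rightarrow> real" where
  "dual_norm N g = (SUP v\<in>{v. N v \<le> 1}. g \<bullet> v)"

end

theory Submission
  imports Defs
begin

text \<open>Expanding the divergences gives the three-point identity
  B(\<pi>*\<parallel>\<pi>hat) - B(\<pi>*\<parallel>\<pi>0) = -B(\<pi>hat\<parallel>\<pi>0) + \<langle>\<pi>* - \<pi>hat, \<nabla>F(\<pi>0) - \<nabla>F(\<pi>hat)\<rangle>.
  Since \<pi>hat minimises the expected divergence to \<pi>0 over the convex set C_coh \<inter> \<Pi>, which
  contains \<pi>bar, the first-order optimality condition makes the part of the inner product along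
  \<pi>bar - \<pi>hat nonpositive in expectation, leaving only the part along \<pi>* - \<pi>bar. Under strong
  convexity, \<parallel>\<pi>* - \<pi>bar\<parallel>^2 \<le> (2/\<mu>) B(\<pi>*\<parallel>\<pi>bar), so the generalised Cauchy-Schwarz inequality
  \<langle>a, g\<rangle> \<le> \<parallel>a\<parallel> \<parallel>g\<parallel>_* followed by Cauchy-Schwarz in L^2(D) bounds it; L-smoothness further bounds
  \<parallel>\<nabla>F(\<pi>0) - \<nabla>F(\<pi>hat)\<parallel>_*^2 by L^2\<parallel>\<pi>hat - \<pi>0\<parallel>^2 \<le> (2L^2/\<mu>) B(\<pi>hat\<parallel>\<pi>0).\<close>

lemma Ex_eq_sum: "Ex (D::'x::finite pmf) f = (\<Sum>x\<in>UNIV. pmf D x * f x)"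
  unfolding Ex_def by (subst integral_measure_pmf[of UNIV]) auto

lemma Ex_add: "Ex (D::'x::finite pmf) (\<lambda>x. f x + g x) = Ex D f + Ex D g"
  by (simp add: Ex_eq_sum sum.distrib algebra_simps)

lemma Ex_diff: "Ex (D::'x::finite pmf) (\<lambda>x. f x - g x) = Ex D f - Ex D g"
  by (simp add: Ex_eq_sum sum_subtractf algebra_simps)

lemma Ex_cmult: "Ex (D::'x::finite pmf) (\<lambda>x. c * f x) = c * Ex D f"
  by (simp add: Ex_eq_sum sum_distrib_left algebra_simps)

lemma Ex_mono: "(\<And>x. f x \<le> g x) \<Longrightarrow> Ex (D::'x::finite pmf) f \<le> Ex D g"
  unfolding Ex_eq_sum by (intro sum_mono mult_left_mono) auto

lemma Ex_nonneg: "(\<And>x. 0 \<le> f x) \<Longrightarrow> 0 \<le> Ex (D::'x::finite pmf) f"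
  unfolding Ex_eq_sum by (intro sum_nonneg mult_nonneg_nonneg) auto

lemma Ex_Cauchy_Schwarz:
  "Ex (D::'x::finite pmf) (\<lambda>x. a x * b x) \<le> sqrt (Ex D (\<lambda>x. (a x)\<^sup>2)) * sqrt (Ex D (\<lambda>x. (b x)\<^sup>2))"
proof -
  let ?w = "\<lambda>x. sqrt (pmf D x)"
  have "(\<Sum>x\<in>UNIV. (?w x * a x) * (?w x * b x))\<^sup>2
      \<le> (\<Sum>x\<in>UNIV. (?w x * a x)\<^sup>2) * (\<Sum>x\<in>UNIV. (?w x * b x)\<^sup>2)"
    by (rule Cauchy_Schwarz_ineq_sum)
  then have "(Ex D (\<lambda>x. a x * b x))\<^sup>2 \<le> Ex D (\<lambda>x. (a x)\<^sup>2) * Ex D (\<lambda>x. (b x)\<^sup>2)"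
    by (simp add: Ex_eq_sum power_mult_distrib algebra_simps)
  then have "\<bar>Ex D (\<lambda>x. a x * b x)\<bar> \<le> sqrt (Ex D (\<lambda>x. (a x)\<^sup>2) * Ex D (\<lambda>x. (b x)\<^sup>2))"
    using real_le_rsqrt by (metis real_sqrt_abs real_sqrt_le_mono)
  then show ?thesis by (simp add: real_sqrt_mult)
qed

lemma is_norm_bounded_below:
  fixes N :: "real^'y::finite \<Rightarrow> real"
  assumes "is_norm N"
  shows "\<exists>m>0. \<forall>v. m * norm v \<le> N v"
proof -
  have pos: "\<And>v. 0 \<le> N v" and zero: "\<And>v. N v = 0 \<longleftrightarrow> v = 0"
    and hom: "\<And>c v. N (c *\<^sub>R v) = \<bar>c\<bar> * N v" and tri: "\<And>u v. N (u + v) \<le> N u + N v"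
    using assms unfolding is_norm_def by auto
  have "convex_on UNIV N"
  proof (rule convex_onI)
    fix t :: real and u v :: "real^'y" assume "0 < t" "t < 1"
    then show "N ((1 - t) *\<^sub>R u + t *\<^sub>R v) \<le> (1 - t) * N u + t * N v"
      using tri[of "(1 - t) *\<^sub>R u" "t *\<^sub>R v"] hom[of "1 - t" u] hom[of t v] by simp
  qed simp
  then have cont: "continuous_on (sphere 0 1) N"
    using convex_on_continuous continuous_on_subset open_UNIV by blast
  obtain v0 where v0: "v0 \<in> sphere 0 1" and min: "\<And>v. v \<in> sphere 0 1 \<Longrightarrow> N v0 \<le> N v"
    using continuous_attains_inf[OF compact_sphere _ cont] by fastforce
  have "0 < N v0"
    using v0 pos zero by (metis less_eq_real_def norm_zero mem_sphere_0 zero_neq_one)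
  moreover have "N v0 * norm v \<le> N v" for v
  proof (cases "v = 0")
    case False
    have "N v0 \<le> N (v /\<^sub>R norm v)" using min[of "v /\<^sub>R norm v"] False by simp
    also have "\<dots> = N v / norm v" using hom[of "inverse (norm v)" v] by (simp add: field_simps)
    finally show ?thesis using False by (simp add: field_simps)
  qed (use zero pos in simp)
  ultimately show ?thesis by blast
qed

lemma is_norm_zero: "is_norm N \<Longrightarrow> N 0 = 0"
  unfolding is_norm_def by blast

lemma is_norm_minus_commute: "is_norm N \<Longrightarrow> N (p - q) = N (q - p)"
  unfolding is_norm_def by (metis abs_neg_one minus_diff_eq mult_1 scaleR_minus1_left)

lemma bdd_above_dual_norm:
  fixes N :: "real^'y::finite \<Rightarrow> real"
  assumes "is_norm N"
  shows "bdd_above ((\<lambda>v. g \<bullet> v) ` {v. N v \<le> 1})"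
proof -
  obtain m where "0 < m" and m: "\<And>v. m * norm v \<le> N v"
    using is_norm_bounded_below[OF assms] by blast
  show ?thesis
  proof (rule bdd_aboveI2)
    fix v assume "v \<in> {v. N v \<le> 1}"
    then have "norm v \<le> 1 / m" using m[of v] \<open>0 < m\<close> by (simp add: field_simps)
    then have "norm g * norm v \<le> norm g / m" by (simp add: mult_left_mono divide_inverse)
    then show "g \<bullet> v \<le> norm g / m" using norm_cauchy_schwarz[of g v] by linarith
  qed
qed

lemma inner_le_norm_mult_dual_norm:
  fixes N :: "real^'y::finite \<Rightarrow> real"
  assumes "is_norm N"
  shows "a \<bullet> g \<le> N a * dual_norm N g"
proof (cases "a = 0")
  case False
  have pos: "0 < N a" and hom: "N (inverse (N a) *\<^sub>R a) = inverse (N a) * N a"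
    using assms False unfolding is_norm_def by (metis less_eq_real_def, simp)
  then have "g \<bullet> (inverse (N a) *\<^sub>R a) \<le> dual_norm N g"
    unfolding dual_norm_def by (intro cSUP_upper bdd_above_dual_norm assms) simp
  then show ?thesis using pos by (simp add: inner_commute field_simps)
qed (simp add: is_norm_zero[OF assms])

lemma dual_norm_nonneg:
  fixes N :: "real^'y::finite \<Rightarrow> real"
  assumes "is_norm N"
  shows "0 \<le> dual_norm N g"
proof -
  have "g \<bullet> 0 \<le> dual_norm N g"
    unfolding dual_norm_def by (intro cSUP_upper bdd_above_dual_norm assms) (simp add: is_norm_zero[OF assms])
  then show ?thesis by simp
qed

lemma bregman_three_point:
  "bregman F gradF s h - bregman F gradF s q
     = - bregman F gradF h q + (s - h) \<bullet> (gradF q - gradF h)"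
  by (simp add: bregman_def inner_diff algebra_simps inner_commute)

definition strongly_convex_wrt_norm ::
    "(real^'y::finite) set \<Rightarrow> (real^'y \<Rightarrow> real) \<Rightarrow> (real^'y \<Rightarrow> real^'y) \<Rightarrow> (real^'y \<Rightarrow> real) \<Rightarrow> real \<Rightarrow> bool"
  where "strongly_convex_wrt_norm K F gradF N \<mu> \<longleftrightarrow>
    (\<forall>p\<in>K. \<forall>q\<in>interior K. bregman F gradF p q \<ge> \<mu> / 2 * (N (p - q))\<^sup>2)"

definition smooth_wrt_norm ::
    "(real^'y::finite) set \<Rightarrow> (real^'y \<Rightarrow> real^'y) \<Rightarrow> (real^'y \<Rightarrow> real) \<Rightarrow> real \<Rightarrow> bool"
  where "smooth_wrt_norm K gradF N L \<longleftrightarrow>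
    (\<forall>p\<in>interior K. \<forall>q\<in>interior K. dual_norm N (gradF p - gradF q) \<le> L * N (p - q))"

lemma norm_sq_le_bregman:
  assumes "strongly_convex_wrt_norm K F gradF N \<mu>" "0 < \<mu>" "p \<in> K" "q \<in> interior K"
  shows "(N (p - q))\<^sup>2 \<le> 2 / \<mu> * bregman F gradF p q"
proof -
  have "\<mu> / 2 * (N (p - q))\<^sup>2 \<le> bregman F gradF p q"
    using assms(1,3,4) unfolding strongly_convex_wrt_norm_def by blast
  then show ?thesis
    using \<open>0 < \<mu>\<close> by (simp add: field_simps)
qed

lemma bregman_nonneg:
  assumes "strongly_convex_wrt_norm K F gradF N \<mu>" "0 < \<mu>" "p \<in> K" "q \<in> interior K"
  shows "0 \<le> bregman F gradF p q"
proof -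
  have "0 \<le> 2 / \<mu> * bregman F gradF p q"
    using norm_sq_le_bregman[OF assms] zero_le_power2 order_trans by blast
  then show ?thesis using \<open>0 < \<mu>\<close> by (simp add: zero_le_divide_iff)
qed

lemma dual_norm_grad_sq_le_bregman:
  assumes "is_norm N" "strongly_convex_wrt_norm K F gradF N \<mu>" "smooth_wrt_norm K gradF N L"
    and "0 < \<mu>" "p \<in> interior K" "q \<in> interior K"
  shows "(dual_norm N (gradF q - gradF p))\<^sup>2 \<le> 2 * L\<^sup>2 / \<mu> * bregman F gradF p q"
proof -
  have "(dual_norm N (gradF q - gradF p))\<^sup>2 \<le> (L * N (p - q))\<^sup>2"
    using assms(3,5,6) unfolding smooth_wrt_norm_def
    by (intro power_mono dual_norm_nonneg assms(1)) (metis is_norm_minus_commute[OF assms(1)])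
  also have "\<dots> \<le> L\<^sup>2 * (2 / \<mu> * bregman F gradF p q)"
    unfolding power_mult_distrib using assms(5,6) interior_subset
    by (intro mult_left_mono norm_sq_le_bregman[OF assms(2,4)]) auto
  finally show ?thesis by (simp add: mult.assoc mult.left_commute)
qed

lemma Ex_inner_le_sqrt_bregman:
  fixes D :: "'x::finite pmf"
  assumes "is_norm N" "strongly_convex_wrt_norm K F gradF N \<mu>" "0 < \<mu>"
    and "\<And>x. s x \<in> K" "\<And>x. b x \<in> interior K"
  shows "Ex D (\<lambda>x. (s x - b x) \<bullet> g x)
    \<le> sqrt (2 * Ex D (\<lambda>x. bregman F gradF (s x) (b x)) / \<mu>) * sqrt (Ex D (\<lambda>x. (dual_norm N (g x))\<^sup>2))"
proof -
  have "Ex D (\<lambda>x. (s x - b x) \<bullet> g x) \<le> Ex D (\<lambda>x. N (s x - b x) * dual_norm N (g x))"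
    by (intro Ex_mono inner_le_norm_mult_dual_norm assms(1))
  also have "\<dots> \<le> sqrt (Ex D (\<lambda>x. (N (s x - b x))\<^sup>2)) * sqrt (Ex D (\<lambda>x. (dual_norm N (g x))\<^sup>2))"
    by (rule Ex_Cauchy_Schwarz)
  also have "\<dots> \<le> sqrt (2 * Ex D (\<lambda>x. bregman F gradF (s x) (b x)) / \<mu>) * sqrt (Ex D (\<lambda>x. (dual_norm N (g x))\<^sup>2))"
  proof (intro mult_right_mono real_sqrt_le_mono)
    have "Ex D (\<lambda>x. (N (s x - b x))\<^sup>2) \<le> Ex D (\<lambda>x. 2 / \<mu> * bregman F gradF (s x) (b x))"
      by (intro Ex_mono norm_sq_le_bregman[OF assms(2,3)] assms(4,5))
    then show "Ex D (\<lambda>x. (N (s x - b x))\<^sup>2) \<le> 2 * Ex D (\<lambda>x. bregman F gradF (s x) (b x)) / \<mu>"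
      unfolding Ex_cmult by simp
  qed (simp add: Ex_nonneg)
  finally show ?thesis .
qed

lemma Ex_dual_norm_grad_sq_le_bregman:
  fixes D :: "'x::finite pmf"
  assumes "is_norm N" "strongly_convex_wrt_norm K F gradF N \<mu>" "smooth_wrt_norm K gradF N L"
    and "0 < \<mu>" "\<And>x. p x \<in> interior K" "\<And>x. q x \<in> interior K"
  shows "Ex D (\<lambda>x. (dual_norm N (gradF (q x) - gradF (p x)))\<^sup>2)
    \<le> 2 * L\<^sup>2 / \<mu> * Ex D (\<lambda>x. bregman F gradF (p x) (q x))"
  unfolding Ex_cmult[symmetric]
  by (intro Ex_mono dual_norm_grad_sq_le_bregman[OF assms(1-4)] assms(5,6))

lemma has_derivative_imp_right_quotient_tendsto:
  fixes F :: "'a::real_normed_vector \<Rightarrow> real"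
  assumes "(F has_derivative F') (at p)"
  shows "((\<lambda>t. (F (p + t *\<^sub>R d) - F p) / t) \<longlongrightarrow> F' d) (at_right 0)"
proof -
  have "((\<lambda>t. p + t *\<^sub>R d) has_derivative (\<lambda>t. t *\<^sub>R d)) (at 0)"
    by (auto intro!: derivative_eq_intros)
  then have "((\<lambda>t. F (p + t *\<^sub>R d)) has_derivative (\<lambda>t. F' (t *\<^sub>R d))) (at 0)"
    using has_derivative_compose[of "\<lambda>t. p + t *\<^sub>R d" _ 0 UNIV F F'] assms by (simp add: o_def)
  then have "((\<lambda>t. F (p + t *\<^sub>R d)) has_field_derivative F' d) (at 0)"
    using linear_cmul[OF has_derivative_linear[OF assms]] unfolding has_field_derivative_def
    by (simp add: mult.commute[of _ "F' d"])
  then have "((\<lambda>t. (F (p + t *\<^sub>R d) - F p) / t) \<longlongrightarrow> F' d) (at 0)"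
    unfolding DERIV_def by simp
  then show ?thesis by (rule tendsto_mono[OF at_le, rotated]) simp
qed

lemma Ex_bregman_minimizer_first_order:
  fixes D :: "'x::finite pmf"
  assumes seg: "\<And>t. 0 \<le> t \<Longrightarrow> t \<le> 1 \<Longrightarrow> (\<lambda>x. (1 - t) *\<^sub>R h x + t *\<^sub>R b x) \<in> S"
    and min: "\<And>\<pi>. \<pi> \<in> S \<Longrightarrow>
      Ex D (\<lambda>x. bregman F gradF (h x) (q x)) \<le> Ex D (\<lambda>x. bregman F gradF (\<pi> x) (q x))"
    and grad: "\<And>x. (F has_derivative (\<lambda>v. gradF (h x) \<bullet> v)) (at (h x))"
  shows "Ex D (\<lambda>x. (b x - h x) \<bullet> (gradF (q x) - gradF (h x))) \<le> 0"
proof -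
  define d where "d x = b x - h x" for x
  \<comment> \<open>\<open>t * Q t\<close> is the increase of the objective from \<open>h\<close> to \<open>h + t d\<close>.\<close>
  define Q where "Q t = Ex D (\<lambda>x. (F (h x + t *\<^sub>R d x) - F (h x)) / t - gradF (q x) \<bullet> d x)" for t
  have "0 \<le> Q t" if "0 < t" "t \<le> 1" for t
  proof -
    have "(\<lambda>x. h x + t *\<^sub>R d x) \<in> S"
      using seg[of t] that by (simp add: d_def algebra_simps)
    then have "0 \<le> Ex D (\<lambda>x. bregman F gradF (h x + t *\<^sub>R d x) (q x)) - Ex D (\<lambda>x. bregman F gradF (h x) (q x))"
      using min by fastforce
    also have "\<dots> = t * Q t"
      unfolding Q_def Ex_cmult[symmetric] Ex_diff[symmetric] using \<open>0 < t\<close>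
      by (intro arg_cong[where f = "Ex D"])
        (simp add: fun_eq_iff bregman_def inner_diff_right inner_add_right field_simps)
    finally show ?thesis using \<open>0 < t\<close> by (simp add: zero_le_mult_iff)
  qed
  then have "\<forall>\<^sub>F t in at_right 0. 0 \<le> Q t"
    unfolding eventually_at_right_field by (intro exI[of _ 1]) auto
  moreover have "(Q \<longlongrightarrow> Ex D (\<lambda>x. gradF (h x) \<bullet> d x - gradF (q x) \<bullet> d x)) (at_right 0)"
    unfolding Q_def Ex_eq_sum
    by (intro tendsto_sum tendsto_mult tendsto_const tendsto_diff
        has_derivative_imp_right_quotient_tendsto grad)
  ultimately have "0 \<le> Ex D (\<lambda>x. gradF (h x) \<bullet> d x - gradF (q x) \<bullet> d x)"
    by (intro tendsto_lowerbound) auto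
  moreover have "Ex D (\<lambda>x. gradF (h x) \<bullet> d x - gradF (q x) \<bullet> d x)
      = - Ex D (\<lambda>x. (b x - h x) \<bullet> (gradF (q x) - gradF (h x)))"
    unfolding Ex_eq_sum sum_negf[symmetric]
    by (intro sum.cong) (auto simp: d_def inner_diff algebra_simps inner_commute)
  ultimately show ?thesis by simp
qed

lemma Ex_bregman_minimizer_excess_le:
  fixes D :: "'x::finite pmf"
  assumes seg: "\<And>t. 0 \<le> t \<Longrightarrow> t \<le> 1 \<Longrightarrow> (\<lambda>x. (1 - t) *\<^sub>R h x + t *\<^sub>R b x) \<in> S"
    and min: "\<And>\<pi>. \<pi> \<in> S \<Longrightarrow>
      Ex D (\<lambda>x. bregman F gradF (h x) (q x)) \<le> Ex D (\<lambda>x. bregman F gradF (\<pi> x) (q x))"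
    and grad: "\<And>x. (F has_derivative (\<lambda>v. gradF (h x) \<bullet> v)) (at (h x))"
  shows "Ex D (\<lambda>x. bregman F gradF (s x) (h x)) - Ex D (\<lambda>x. bregman F gradF (s x) (q x))
    \<le> - Ex D (\<lambda>x. bregman F gradF (h x) (q x))
      + Ex D (\<lambda>x. (s x - b x) \<bullet> (gradF (q x) - gradF (h x)))"
proof -
  let ?g = "\<lambda>x. gradF (q x) - gradF (h x)"
  have "Ex D (\<lambda>x. bregman F gradF (s x) (h x)) - Ex D (\<lambda>x. bregman F gradF (s x) (q x))
      = Ex D (\<lambda>x. (s x - b x) \<bullet> ?g x) + Ex D (\<lambda>x. (b x - h x) \<bullet> ?g x)
        - Ex D (\<lambda>x. bregman F gradF (h x) (q x))"
    unfolding Ex_diff[symmetric] Ex_add[symmetric]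
    by (intro arg_cong[where f = "Ex D"]) (simp add: fun_eq_iff bregman_three_point inner_diff_left)
  then show ?thesis
    using Ex_bregman_minimizer_first_order[OF seg min grad] by linarith
qed

lemma convex_prob_simplex: "convex prob_simplex"
proof (rule convexI)
  fix p q :: "real^'y" and u v :: real
  assume "p \<in> prob_simplex" "q \<in> prob_simplex" "0 \<le> u" "0 \<le> v" "u + v = 1"
  then show "u *\<^sub>R p + v *\<^sub>R q \<in> prob_simplex"
    unfolding prob_simplex_def by (simp add: sum.distrib sum_distrib_left[symmetric])
qed

lemma models_convex_C_coh: "models_convex (C_coh \<Phi>)"
  using convex_prob_simplex unfolding models_convex_def C_coh_def Pi_all_def convex_alt by fastforce

lemma models_convex_Int: "models_convex P \<Longrightarrow> models_convex Q \<Longrightarrow> models_convex (P \<inter> Q)"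
  unfolding models_convex_def by blast

lemma sqrt_mult_le_of_le:
  fixes \<epsilon> E D L \<mu> :: real
  assumes "0 < \<mu>" "0 \<le> L" "0 \<le> \<epsilon>" "E \<le> 2 * L\<^sup>2 / \<mu> * D"
  shows "sqrt (2 * \<epsilon> / \<mu>) * sqrt E \<le> 2 * L / \<mu> * sqrt (\<epsilon> * D)"
proof -
  have "sqrt (2 * \<epsilon> / \<mu>) * sqrt E \<le> sqrt (2 * \<epsilon> / \<mu>) * sqrt (2 * L\<^sup>2 / \<mu> * D)"
    using assms by (intro mult_left_mono real_sqrt_le_mono) auto
  also have "\<dots> = sqrt ((2 * L / \<mu>)\<^sup>2 * (\<epsilon> * D))"
    unfolding real_sqrt_mult[symmetric] by (simp add: power2_eq_square field_simps)
  also have "\<dots> = 2 * L / \<mu> * sqrt (\<epsilon> * D)"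
    using assms(1,2) by (simp add: real_sqrt_mult)
  finally show ?thesis .
qed

lemma neg_add_mult_sqrt_less_zero:
  fixes \<epsilon> D L \<mu> :: real
  assumes "0 < \<mu>" "0 < L" "0 \<le> \<epsilon>" "\<epsilon> < (\<mu> / (2 * L))\<^sup>2 * D"
  shows "- D + 2 * L / \<mu> * sqrt (\<epsilon> * D) < 0"
proof -
  have "0 < D"
  proof (rule ccontr)
    assume "\<not> 0 < D"
    then have "(\<mu> / (2 * L))\<^sup>2 * D \<le> 0" by (simp add: mult_nonneg_nonpos)
    then show False using assms(3,4) by linarith
  qed
  then have "\<epsilon> * D < (\<mu> / (2 * L) * D)\<^sup>2"
    using mult_strict_right_mono[OF assms(4)] by (simp add: power2_eq_square algebra_simps)
  then have "sqrt (\<epsilon> * D) < \<mu> / (2 * L) * D"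
    using assms(1,2) \<open>0 < D\<close> by (intro real_less_lsqrt) auto
  then have "2 * L / \<mu> * sqrt (\<epsilon> * D) < 2 * L / \<mu> * (\<mu> / (2 * L) * D)"
    using assms(1,2) by (intro mult_strict_left_mono) auto
  also have "\<dots> = D" using assms(1,2) by simp
  finally show ?thesis by simp
qed

theorem theorem2:
  fixes \<Phi> :: "'x::finite \<Rightarrow> 'x"
    and Pi :: "('x \<Rightarrow> real^'y::finite) set"
    and \<pi>0 \<pi>star \<pi>bar \<pi>hat :: "'x \<Rightarrow> real^'y"
    and Dx :: "'x pmf"
    and F :: "real^'y \<Rightarrow> real" and gradF :: "real^'y \<Rightarrow> real^'y"
    and K :: "(real^'y) set"
    and N :: "real^'y \<Rightarrow> real" and \<mu> L :: real
  assumes invol: "\<And>x. \<Phi> (\<Phi> x) = x"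
    and Pi_sub: "Pi \<subseteq> Pi_all" and Pi_closed: "closed Pi" and Pi_convex: "models_convex Pi"
    and pi0: "\<pi>0 \<in> Pi_all"
    and pistar: "\<forall>x. \<pi>star x \<in> prob_simplex"
    and Dx_full: "set_pmf Dx = UNIV"
    and K_convex: "convex K" and simplex_K: "prob_simplex \<subseteq> K"
    and F_convex: "convex_on K F"
    and F_grad: "\<And>p. p \<in> interior K \<Longrightarrow> (F has_derivative (\<lambda>h. gradF p \<bullet> h)) (at p)"
    and pibar_min: "\<pi>bar \<in> C_coh \<Phi> \<inter> Pi"
      "\<And>\<pi>. \<pi> \<in> C_coh \<Phi> \<inter> Pi \<Longrightarrow>
         Ex Dx (\<lambda>x. bregman F gradF (\<pi>bar x) (\<pi>star x)) \<le> Ex Dx (\<lambda>x. bregman F gradF (\<pi> x) (\<pi>star x))"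
    and pihat_min: "\<pi>hat \<in> C_coh \<Phi> \<inter> Pi"
      "\<And>\<pi>. \<pi> \<in> C_coh \<Phi> \<inter> Pi \<Longrightarrow>
         Ex Dx (\<lambda>x. bregman F gradF (\<pi>hat x) (\<pi>0 x)) \<le> Ex Dx (\<lambda>x. bregman F gradF (\<pi> x) (\<pi>0 x))"
    and relevant: "\<And>x. \<pi>0 x \<in> interior K" "\<And>x. \<pi>hat x \<in> interior K"
      "\<And>x. \<pi>star x \<in> interior K" "\<And>x. \<pi>bar x \<in> interior K"
  shows
   "(let \<epsilon> = Ex Dx (\<lambda>x. bregman F gradF (\<pi>star x) (\<pi>bar x));
         D = Ex Dx (\<lambda>x. bregman F gradF (\<pi>hat x) (\<pi>0 x));
         lhs = Ex Dx (\<lambda>x. bregman F gradF (\<pi>star x) (\<pi>hat x))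
               - Ex Dx (\<lambda>x. bregman F gradF (\<pi>star x) (\<pi>0 x))
     in lhs \<le> - D + Ex Dx (\<lambda>x. (\<pi>star x - \<pi>bar x) \<bullet> (gradF (\<pi>0 x) - gradF (\<pi>hat x)))
      \<and> ((is_norm N \<and> 0 < \<mu> \<and>
           (\<forall>p\<in>K. \<forall>q\<in>interior K. bregman F gradF p q \<ge> \<mu> / 2 * (N (p - q))\<^sup>2)) \<longrightarrow>
          lhs \<le> - D + sqrt (2 * \<epsilon> / \<mu>)
                  * sqrt (Ex Dx (\<lambda>x. (dual_norm N (gradF (\<pi>0 x) - gradF (\<pi>hat x)))\<^sup>2))
          \<and> ((0 < L \<and> (\<forall>p\<in>interior K. \<forall>q\<in>interior K.
                  dual_norm N (gradF p - gradF q) \<le> L * N (p - q))) \<longrightarrow>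
               lhs \<le> - D + 2 * L / \<mu> * sqrt (\<epsilon> * D)
               \<and> (\<epsilon> < (\<mu> / (2 * L))\<^sup>2 * D \<longrightarrow> - D + 2 * L / \<mu> * sqrt (\<epsilon> * D) < 0))))"
proof -
  define \<epsilon> where "\<epsilon> = Ex Dx (\<lambda>x. bregman F gradF (\<pi>star x) (\<pi>bar x))"
  define D where "D = Ex Dx (\<lambda>x. bregman F gradF (\<pi>hat x) (\<pi>0 x))"
  define G where "G = Ex Dx (\<lambda>x. (dual_norm N (gradF (\<pi>0 x) - gradF (\<pi>hat x)))\<^sup>2)"
  define lhs where "lhs = Ex Dx (\<lambda>x. bregman F gradF (\<pi>star x) (\<pi>hat x))
    - Ex Dx (\<lambda>x. bregman F gradF (\<pi>star x) (\<pi>0 x))"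
  have \<pi>star_K: "\<And>x. \<pi>star x \<in> K"
    using relevant(3) interior_subset by blast
  have seg: "\<And>t. 0 \<le> t \<Longrightarrow> t \<le> 1 \<Longrightarrow> (\<lambda>x. (1 - t) *\<^sub>R \<pi>hat x + t *\<^sub>R \<pi>bar x) \<in> C_coh \<Phi> \<inter> Pi"
    using models_convex_Int[OF models_convex_C_coh Pi_convex] pihat_min(1) pibar_min(1)
    unfolding models_convex_def by blast
  have excess: "lhs \<le> - D + Ex Dx (\<lambda>x. (\<pi>star x - \<pi>bar x) \<bullet> (gradF (\<pi>0 x) - gradF (\<pi>hat x)))"
    unfolding lhs_def D_def
    by (rule Ex_bregman_minimizer_excess_le[OF seg pihat_min(2) F_grad[OF relevant(2)]])
  have strong: "lhs \<le> - D + sqrt (2 * \<epsilon> / \<mu>) * sqrt G"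
    if "is_norm N" "0 < \<mu>" "strongly_convex_wrt_norm K F gradF N \<mu>"
    using excess Ex_inner_le_sqrt_bregman[where D = Dx and s = \<pi>star and b = \<pi>bar
        and g = "\<lambda>x. gradF (\<pi>0 x) - gradF (\<pi>hat x)", OF that(1,3,2) \<pi>star_K relevant(4)]
    unfolding \<epsilon>_def G_def by linarith
  have \<epsilon>_nonneg: "0 \<le> \<epsilon>" if "0 < \<mu>" "strongly_convex_wrt_norm K F gradF N \<mu>"
    unfolding \<epsilon>_def by (intro Ex_nonneg bregman_nonneg[OF that(2,1)] \<pi>star_K relevant)
  have smooth: "lhs \<le> - D + 2 * L / \<mu> * sqrt (\<epsilon> * D)"
    if "is_norm N" "0 < \<mu>" "strongly_convex_wrt_norm K F gradF N \<mu>"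
      and "0 < L" "smooth_wrt_norm K gradF N L"
    using strong[OF that(1-3)] that(4) sqrt_mult_le_of_le[OF that(2) _ \<epsilon>_nonneg[OF that(2,3)]
        Ex_dual_norm_grad_sq_le_bregman[where D = Dx and p = \<pi>hat and q = \<pi>0,
          OF that(1,3,5,2) relevant(2,1), folded G_def D_def]]
    by fastforce
  show ?thesis
    unfolding Let_def \<epsilon>_def[symmetric] D_def[symmetric] G_def[symmetric] lhs_def[symmetric]
      strongly_convex_wrt_norm_def[symmetric] smooth_wrt_norm_def[symmetric]
    using excess strong smooth \<epsilon>_nonneg neg_add_mult_sqrt_less_zero by blast
qed

end
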